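(* Let $K$ be a Polish group admitting a compatible bi-invariant metric and let $\Gamma \leq K$ be a discrete subgroup. Let $(Z, d_Z)$ be a bounded Polish metric space on which $\Gamma$ acts faithfully by isometries. Then there exist a bounded Polish metric space $(Y, d_Y)$, a continuous, faithful, isometric action of $K$ on $Y$, and an isometric embedding $e \colon Z \to Y$ which is $\Gamma$-equivariant (i.e., $e(\gamma\cdot z)=\gamma\cdot e(z)$ for all $\gamma\in\Gamma$, $z\in Z$). *)

theory Defs
  imports "HOL-Analysis.Analysis" "HOL-Algebra.Group_Action"
begin

definition Polish_space :: "'a topology \<Rightarrow> bool" where
  "Polish_space X \<longleftrightarrow> completely_metrizable_space X \<and> separable_space X"

definition Polish_metric_space :: "'a set \<Rightarrow> ('a \<Rightarrow> 'a \<Rightarrow> real) \<Rightarrow> bool" where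
  "Polish_metric_space M d \<longleftrightarrow>
     Metric_space M d \<and> Metric_space.mcomplete M d \<and> separable_space (Metric_space.mtopology M d)"

definition bounded_metric_space :: "'a set \<Rightarrow> ('a \<Rightarrow> 'a \<Rightarrow> real) \<Rightarrow> bool" where
  "bounded_metric_space M d \<longleftrightarrow> Metric_space M d \<and> Metric_space.mbounded M d M"

definition topological_group :: "('g, 'b) monoid_scheme \<Rightarrow> 'g topology \<Rightarrow> bool" where
  "topological_group G T \<longleftrightarrow> group G \<and> topspace T = carrier G \<and>
     continuous_map (prod_topology T T) T (\<lambda>(x, y). x \<otimes>\<^bsub>G\<^esub> y) \<and>
     continuous_map T T (\<lambda>x. inv\<^bsub>G\<^esub> x)"

definition Polish_group :: "('g, 'b) monoid_scheme \<Rightarrow> 'g topology \<Rightarrow> bool" where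
  "Polish_group G T \<longleftrightarrow> topological_group G T \<and> Polish_space T"

definition has_compatible_biinvariant_metric :: "('g, 'b) monoid_scheme \<Rightarrow> 'g topology \<Rightarrow> bool" where
  "has_compatible_biinvariant_metric G T \<longleftrightarrow>
     (\<exists>d. Metric_space (carrier G) d \<and> Metric_space.mtopology (carrier G) d = T \<and>
          (\<forall>g\<in>carrier G. \<forall>x\<in>carrier G. \<forall>y\<in>carrier G.
             d (g \<otimes>\<^bsub>G\<^esub> x) (g \<otimes>\<^bsub>G\<^esub> y) = d x y \<and>
             d (x \<otimes>\<^bsub>G\<^esub> g) (y \<otimes>\<^bsub>G\<^esub> g) = d x y))"

definition discrete_subgroup :: "'g set \<Rightarrow> ('g, 'b) monoid_scheme \<Rightarrow> 'g topology \<Rightarrow> bool" where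
  "discrete_subgroup H G T \<longleftrightarrow> subgroup H G \<and> subtopology T H = discrete_topology H"

definition isometric_action :: "'g set \<Rightarrow> 'a set \<Rightarrow> ('a \<Rightarrow> 'a \<Rightarrow> real) \<Rightarrow> ('g \<Rightarrow> 'a \<Rightarrow> 'a) \<Rightarrow> bool" where
  "isometric_action A M d \<phi> \<longleftrightarrow> (\<forall>g\<in>A. \<forall>x\<in>M. \<forall>y\<in>M. d (\<phi> g x) (\<phi> g y) = d x y)"

end

theory Submission
  imports Defs
begin

text \<open>
  The group \<open>K\<close> acts isometrically by left translation, \<open>(g \<cdot> f)(k, w) = f(g\<inverse> k, w)\<close>, on the
  bounded real functions on \<open>K \<times> (Z \<union> {\<star>})\<close> with the sup metric. A point \<open>z\<close> is sent to
  \<open>(k, w) \<mapsto> min B (\<rho>\<^sub>z(k, w))\<close> with \<open>\<rho>\<^sub>z(k, w) = inf\<^sub>\<gamma> C d(k, \<gamma>) + d\<^sub>Z(\<gamma>\<inverse> z, w)\<close>, the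
  distance from \<open>(k, w)\<close> to the class of \<open>(1, z)\<close> in \<open>K \<times>\<^sub>\<Gamma> Z\<close>, where the metric of \<open>K\<close> is
  rescaled by \<open>C = B / \<delta>\<close> for a bound \<open>B \<ge> 1\<close> of \<open>d\<^sub>Z\<close> and a radius \<open>\<delta>\<close> isolating \<open>1\<close> in \<open>\<Gamma>\<close>.
  This forces \<open>\<rho>\<^sub>z(1, w) = d\<^sub>Z(z, w)\<close>, so the map is isometric, and it is \<open>\<Gamma>\<close>-equivariant by
  construction. Bi-invariance of \<open>d\<close> makes all these functions Lipschitz in the \<open>K\<close>-variable,
  which gives joint continuity of the action on the closure \<open>Y\<close> of their \<open>K\<close>-orbits together
  with the orbit of \<open>(k, \<star>) \<mapsto> min 1 (d(k, 1))\<close>; the latter makes the action faithful. \<open>Y\<close> is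
  complete, bounded and separable, hence injects into \<open>nat \<Rightarrow> real\<close>, and everything is
  transported along such an injection.
\<close>

lemma dist_le_fdist:
  fixes f g :: "'a \<Rightarrow> real"
  assumes "f \<in> Met_TC.fspace S" "g \<in> Met_TC.fspace S" "x \<in> S"
  shows "dist (f x) (g x) \<le> Met_TC.fdist S f g"
  using Met_TC.funspace_mdist_le[OF assms(1,2), of "Met_TC.fdist S f g"] assms(3) by auto

lemma fdist_le:
  fixes f g :: "'a \<Rightarrow> real"
  assumes "f \<in> Met_TC.fspace S" "g \<in> Met_TC.fspace S" "S \<noteq> {}"
    and "\<And>x. x \<in> S \<Longrightarrow> dist (f x) (g x) \<le> a"
  shows "Met_TC.fdist S f g \<le> a"
  using Met_TC.funspace_mdist_le[OF assms(1-3)] assms(4) by auto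

lemma mcomplete_fspace:
  "Metric_space.mcomplete (Met_TC.fspace S) (Met_TC.fdist S :: ('a \<Rightarrow> real) \<Rightarrow> _)"
proof -
  have "mcomplete_of (funspace S (Met_TC.Self :: real metric))"
    by (rule Met_TC.mcomplete_funspace) (simp add: complete_UNIV)
  then show ?thesis
    by (simp add: mcomplete_of_def)
qed

lemma (in Metric_space) separable_space_mtopology_iff:
  "separable_space mtopology \<longleftrightarrow>
     (\<exists>C. countable C \<and> C \<subseteq> M \<and> (\<forall>x\<in>M. \<forall>r>0. \<exists>c\<in>C. d x c < r))"
proof
  assume "separable_space mtopology"
  then obtain C where C: "countable C" "C \<subseteq> M" "mtopology closure_of C = M"
    unfolding separable_space_def by auto
  have "\<exists>c\<in>C. d x c < r" if x: "x \<in> M" and r: "r > 0" for x r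
  proof -
    have "x \<in> mtopology closure_of C"
      using C x by simp
    then obtain c where "c \<in> C" "c \<in> mball x r"
      using r unfolding metric_closure_of by blast
    then show ?thesis
      by auto
  qed
  then show "\<exists>C. countable C \<and> C \<subseteq> M \<and> (\<forall>x\<in>M. \<forall>r>0. \<exists>c\<in>C. d x c < r)"
    using C(1,2) by (intro exI[of _ C]) simp
next
  assume "\<exists>C. countable C \<and> C \<subseteq> M \<and> (\<forall>x\<in>M. \<forall>r>0. \<exists>c\<in>C. d x c < r)"
  then obtain C where C: "countable C" "C \<subseteq> M" "\<And>x r. x \<in> M \<Longrightarrow> r > 0 \<Longrightarrow> \<exists>c\<in>C. d x c < r"
    by blast
  have "M \<subseteq> mtopology closure_of C"
  proof
    fix x
    assume x: "x \<in> M"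
    have "\<exists>c\<in>C. c \<in> mball x r" if "r > 0" for r
    proof -
      obtain c where "c \<in> C" "d x c < r"
        using C(3) x \<open>r > 0\<close> by blast
      then show ?thesis
        using C(2) x by auto
    qed
    with x show "x \<in> mtopology closure_of C"
      unfolding metric_closure_of by blast
  qed
  then have "mtopology closure_of C = M"
    using closure_of_subset_topspace[of mtopology C] by auto
  with C(1,2) show "separable_space mtopology"
    unfolding separable_space_def by auto
qed

text \<open>A point is determined by its distances to a countable dense set, and there are
  countably many of these.\<close>
lemma (in Metric_space) separable_imp_inj_into_nat_real:
  assumes "separable_space mtopology"
  shows "\<exists>\<iota> :: _ \<Rightarrow> nat \<Rightarrow> real. inj_on \<iota> M"
proof -
  obtain C where C: "countable C" "C \<subseteq> M" "\<And>x r. x \<in> M \<Longrightarrow> r > 0 \<Longrightarrow> \<exists>c\<in>C. d x c < r"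
    using assms unfolding separable_space_mtopology_iff by blast
  have "inj_on (\<lambda>x n. d x (from_nat_into C n)) M"
  proof (rule inj_onI)
    fix x y
    assume xy: "x \<in> M" "y \<in> M"
      and eq: "(\<lambda>n. d x (from_nat_into C n)) = (\<lambda>n. d y (from_nat_into C n))"
    have "d x y \<le> 0 + r" if "r > 0" for r
    proof -
      obtain c where c: "c \<in> C" "d x c < r / 2"
        using C(3) xy \<open>r > 0\<close> half_gt_zero by blast
      then obtain n where "c = from_nat_into C n"
        using from_nat_into_surj[OF C(1)] by blast
      then have "d y c = d x c"
        using fun_cong[OF eq, of n] by simp
      moreover have "d x y \<le> d x c + d y c"
        using triangle'[of x c y] xy c(1) C(2) by blast
      ultimately show ?thesis
        using c by linarith
    qed
    then have "d x y \<le> 0"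
      by (rule field_le_epsilon)
    then have "d x y = 0"
      using nonneg[of x y] by linarith
    then show "x = y"
      using zero xy by blast
  qed
  then show ?thesis
    by blast
qed

lemma group_actionI:
  assumes "group G"
    and ext: "\<And>g. g \<in> carrier G \<Longrightarrow> \<phi> g \<in> extensional E"
    and closed: "\<And>g x. g \<in> carrier G \<Longrightarrow> x \<in> E \<Longrightarrow> \<phi> g x \<in> E"
    and comp: "\<And>g h x. g \<in> carrier G \<Longrightarrow> h \<in> carrier G \<Longrightarrow> x \<in> E \<Longrightarrow>
                 \<phi> (g \<otimes>\<^bsub>G\<^esub> h) x = \<phi> g (\<phi> h x)"
    and one: "\<And>x. x \<in> E \<Longrightarrow> \<phi> \<one>\<^bsub>G\<^esub> x = x"
  shows "group_action G E \<phi>"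
proof -
  interpret G: group G
    by fact
  have inverse: "\<phi> (inv\<^bsub>G\<^esub> g) (\<phi> g x) = x" "\<phi> g (\<phi> (inv\<^bsub>G\<^esub> g) x) = x"
    if "g \<in> carrier G" "x \<in> E" for g x
    using comp[of "inv\<^bsub>G\<^esub> g" g x] comp[of g "inv\<^bsub>G\<^esub> g" x] one that by simp_all
  have Bij: "\<phi> g \<in> Bij E" if "g \<in> carrier G" for g
  proof -
    have "bij_betw (\<phi> g) E E"
      by (rule bij_betwI[where g = "\<phi> (inv\<^bsub>G\<^esub> g)"]) (use closed inverse that in auto)
    then show ?thesis
      using ext that by (simp add: Bij_def)
  qed
  have hom: "\<phi> (g \<otimes>\<^bsub>G\<^esub> h) = \<phi> g \<otimes>\<^bsub>BijGroup E\<^esub> \<phi> h"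
    if "g \<in> carrier G" "h \<in> carrier G" for g h
  proof -
    have "\<phi> (g \<otimes>\<^bsub>G\<^esub> h) = compose E (\<phi> g) (\<phi> h)"
      using that by (intro extensionalityI[OF ext compose_extensional]) (simp_all add: comp compose_def)
    then show ?thesis
      using Bij that by (simp add: BijGroup_def)
  qed
  show ?thesis
    unfolding group_action_def group_hom_def group_hom_axioms_def hom_def
    using Bij hom group_BijGroup G.is_group by (auto simp: BijGroup_def)
qed

lemma continuous_map_of_dist_le:
  assumes "Metric_space A dA" "Metric_space Y dY" "L > 0"
    and into: "\<And>g y. g \<in> A \<Longrightarrow> y \<in> Y \<Longrightarrow> f g y \<in> Y"
    and dist_le: "\<And>g h y y'. g \<in> A \<Longrightarrow> h \<in> A \<Longrightarrow> y \<in> Y \<Longrightarrow> y' \<in> Y \<Longrightarrow>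
                    dY (f g y) (f h y') \<le> L * dA g h + dY y y'"
  shows "continuous_map (prod_topology (Metric_space.mtopology A dA) (Metric_space.mtopology Y dY))
           (Metric_space.mtopology Y dY) (\<lambda>(g, y). f g y)"
proof -
  interpret A: Metric_space A dA
    by fact
  interpret Y: Metric_space Y dY
    by fact
  have "openin (prod_topology A.mtopology Y.mtopology) {p \<in> A \<times> Y. (\<lambda>(g, y). f g y) p \<in> U}"
    if U: "openin Y.mtopology U" for U
    unfolding openin_prod_topology_alt
  proof (intro allI impI)
    fix g y
    assume "(g, y) \<in> {p \<in> A \<times> Y. (\<lambda>(g, y). f g y) p \<in> U}"
    then have gy: "g \<in> A" "y \<in> Y" "f g y \<in> U"
      by auto
    then obtain r where r: "r > 0" "Y.mball (f g y) r \<subseteq> U"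
      using U unfolding Y.openin_mtopology by blast
    have "(h, y') \<in> {p \<in> A \<times> Y. (\<lambda>(g, y). f g y) p \<in> U}"
      if h: "h \<in> A.mball g (r / (2 * L))" and y': "y' \<in> Y.mball y (r / 2)" for h y'
    proof -
      have "dY (f g y) (f h y') \<le> L * dA g h + dY y y'"
        using gy h y' by (intro dist_le) auto
      also have "\<dots> < r"
        using h y' \<open>L > 0\<close> by (auto simp: field_simps)
      finally show ?thesis
        using gy h y' into r(2) by auto
    qed
    then have "A.mball g (r / (2 * L)) \<times> Y.mball y (r / 2) \<subseteq> {p \<in> A \<times> Y. (\<lambda>(g, y). f g y) p \<in> U}"
      by auto
    then show "\<exists>U' V. openin A.mtopology U' \<and> openin Y.mtopology V \<and> g \<in> U' \<and> y \<in> V \<and>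
                 U' \<times> V \<subseteq> {p \<in> A \<times> Y. (\<lambda>(g, y). f g y) p \<in> U}"
      using gy r \<open>L > 0\<close> by (intro exI conjI) auto
  qed
  then show ?thesis
    unfolding continuous_map by (auto simp: into)
qed

section \<open>Transport along an injection\<close>

definition image_dist :: "('a \<Rightarrow> 'b) \<Rightarrow> 'a set \<Rightarrow> ('a \<Rightarrow> 'a \<Rightarrow> real) \<Rightarrow> 'b \<Rightarrow> 'b \<Rightarrow> real"
  where "image_dist \<iota> M d a b = d (inv_into M \<iota> a) (inv_into M \<iota> b)"

lemma image_dist_image [simp]:
  "inj_on \<iota> M \<Longrightarrow> x \<in> M \<Longrightarrow> y \<in> M \<Longrightarrow> image_dist \<iota> M d (\<iota> x) (\<iota> y) = d x y"
  by (simp add: image_dist_def)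

lemma Metric_space_image_dist:
  assumes "Metric_space M d" "inj_on \<iota> M"
  shows "Metric_space (\<iota> ` M) (image_dist \<iota> M d)"
proof -
  interpret Metric_space M d
    by (fact assms(1))
  show ?thesis
  proof
    fix a b c
    show "0 \<le> image_dist \<iota> M d a b" "image_dist \<iota> M d a b = image_dist \<iota> M d b a"
      by (simp_all add: image_dist_def commute)
    assume "a \<in> \<iota> ` M" "b \<in> \<iota> ` M"
    then obtain x y where "x \<in> M" "y \<in> M" "a = \<iota> x" "b = \<iota> y"
      by blast
    then show "image_dist \<iota> M d a b = 0 \<longleftrightarrow> a = b"
      using assms(2) by (simp add: inj_on_eq_iff zero)
    assume "c \<in> \<iota> ` M"
    then obtain z where "z \<in> M" "c = \<iota> z"
      by blast
    then show "image_dist \<iota> M d a c \<le> image_dist \<iota> M d a b + image_dist \<iota> M d b c"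
      using assms(2) \<open>x \<in> M\<close> \<open>y \<in> M\<close> \<open>a = \<iota> x\<close> \<open>b = \<iota> y\<close> triangle[of x y z] by simp
  qed
qed

lemma mcomplete_image_dist:
  assumes "Metric_space M d" "inj_on \<iota> M" "Metric_space.mcomplete M d"
  shows "Metric_space.mcomplete (\<iota> ` M) (image_dist \<iota> M d)"
proof -
  interpret M: Metric_space M d
    by (fact assms(1))
  interpret N: Metric_space "\<iota> ` M" "image_dist \<iota> M d"
    using Metric_space_image_dist[OF assms(1,2)] .
  let ?j = "inv_into M \<iota>"
  show ?thesis
    unfolding N.mcomplete_def
  proof (intro allI impI)
    fix \<sigma> assume \<sigma>: "N.MCauchy \<sigma>"
    then have "\<sigma> n \<in> \<iota> ` M" for n
      by (simp add: N.MCauchy_def image_subset_iff)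
    then have j\<sigma>: "?j (\<sigma> n) \<in> M" "\<iota> (?j (\<sigma> n)) = \<sigma> n" for n
      by (simp_all add: inv_into_into f_inv_into_f)
    have "M.MCauchy (?j \<circ> \<sigma>)"
      using \<sigma> j\<sigma>(1) unfolding N.MCauchy_def M.MCauchy_def image_dist_def
      by (simp add: image_subset_iff)
    then obtain l where l: "limitin M.mtopology (?j \<circ> \<sigma>) l sequentially"
      using assms(3) M.mcomplete_def by blast
    then have "l \<in> M"
      by (simp add: M.limit_metric_sequentially)
    have dist_l: "image_dist \<iota> M d (\<sigma> n) (\<iota> l) = d (?j (\<sigma> n)) l" for n
      using \<open>l \<in> M\<close> assms(2) by (simp add: image_dist_def)
    have "limitin N.mtopology \<sigma> (\<iota> l) sequentially"
      unfolding N.limit_metric_sequentially dist_l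
    proof (intro conjI allI impI)
      show "\<iota> l \<in> \<iota> ` M"
        using \<open>l \<in> M\<close> by blast
      fix \<epsilon> :: real
      assume "\<epsilon> > 0"
      then obtain N where "\<forall>n\<ge>N. d (?j (\<sigma> n)) l < \<epsilon>"
        using l \<open>\<epsilon> > 0\<close> unfolding M.limit_metric_sequentially comp_apply by blast
      then show "\<exists>N. \<forall>n\<ge>N. \<sigma> n \<in> \<iota> ` M \<and> d (?j (\<sigma> n)) l < \<epsilon>"
        using \<open>\<And>n. \<sigma> n \<in> \<iota> ` M\<close> by blast
    qed
    then show "\<exists>x. limitin N.mtopology \<sigma> x sequentially"
      by blast
  qed
qed

lemma separable_image_dist:
  assumes "Metric_space M d" "inj_on \<iota> M" "separable_space (Metric_space.mtopology M d)"
  shows "separable_space (Metric_space.mtopology (\<iota> ` M) (image_dist \<iota> M d))"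
proof -
  interpret Metric_space12 M d "\<iota> ` M" "image_dist \<iota> M d"
    using assms(1,2) Metric_space_image_dist by (simp add: Metric_space12_def)
  have "homeomorphic_map M1.mtopology M2.mtopology \<iota>"
    using assms(2) by (intro isometry_imp_homeomorphic_map) auto
  then show ?thesis
    using assms(3) homeomorphic_map_imp_homeomorphic_space homeomorphic_separable_space by blast
qed

lemma Polish_metric_space_image_dist:
  "Polish_metric_space M d \<Longrightarrow> inj_on \<iota> M \<Longrightarrow> Polish_metric_space (\<iota> ` M) (image_dist \<iota> M d)"
  unfolding Polish_metric_space_def
  by (simp add: Metric_space_image_dist mcomplete_image_dist separable_image_dist)

lemma bounded_metric_space_image_dist:
  assumes "bounded_metric_space M d" "inj_on \<iota> M"
  shows "bounded_metric_space (\<iota> ` M) (image_dist \<iota> M d)"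
proof -
  interpret Metric_space M d
    using assms(1) by (simp add: bounded_metric_space_def)
  interpret N: Metric_space "\<iota> ` M" "image_dist \<iota> M d"
    using Metric_space_image_dist[OF Metric_space_axioms assms(2)] .
  have "mbounded M"
    using assms(1) by (simp add: bounded_metric_space_def)
  then obtain B where B: "\<forall>x\<in>M. \<forall>y\<in>M. d x y \<le> B"
    unfolding mbounded_alt by blast
  have "\<forall>a\<in>\<iota> ` M. \<forall>b\<in>\<iota> ` M. image_dist \<iota> M d a b \<le> B"
    using B assms(2) by simp
  then show ?thesis
    using N.Metric_space_axioms unfolding bounded_metric_space_def N.mbounded_alt by blast
qed

definition image_action :: "('a \<Rightarrow> 'b) \<Rightarrow> 'a set \<Rightarrow> ('g \<Rightarrow> 'a \<Rightarrow> 'a) \<Rightarrow> 'g \<Rightarrow> 'b \<Rightarrow> 'b"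
  where "image_action \<iota> M \<phi> g = (\<lambda>y\<in>\<iota> ` M. \<iota> (\<phi> g (inv_into M \<iota> y)))"

lemma image_action_image [simp]:
  "inj_on \<iota> M \<Longrightarrow> x \<in> M \<Longrightarrow> image_action \<iota> M \<phi> g (\<iota> x) = \<iota> (\<phi> g x)"
  by (simp add: image_action_def)

lemma faithful_action_image:
  assumes "faithful_action G M \<phi>" "inj_on \<iota> M"
  shows "faithful_action G (\<iota> ` M) (image_action \<iota> M \<phi>)"
proof -
  interpret faithful_action G M \<phi>
    by fact
  have in_M: "\<phi> g x \<in> M" if "g \<in> carrier G" "x \<in> M" for g x
    using element_image[OF that refl] .
  have "group G"
    using group_hom group_hom.axioms(1) by blast
  then have "group_action G (\<iota> ` M) (image_action \<iota> M \<phi>)"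
  proof (rule group_actionI)
    show "image_action \<iota> M \<phi> g \<in> extensional (\<iota> ` M)" for g
      by (simp add: image_action_def)
    show "image_action \<iota> M \<phi> g y \<in> \<iota> ` M" if "g \<in> carrier G" "y \<in> \<iota> ` M" for g y
      using that assms(2) in_M by auto
    show "image_action \<iota> M \<phi> \<one>\<^bsub>G\<^esub> y = y" if "y \<in> \<iota> ` M" for y
      using that assms(2) fun_cong[OF id_eq_one, symmetric] by auto
    show "image_action \<iota> M \<phi> (g \<otimes>\<^bsub>G\<^esub> h) y = image_action \<iota> M \<phi> g (image_action \<iota> M \<phi> h y)"
      if "g \<in> carrier G" "h \<in> carrier G" "y \<in> \<iota> ` M" for g h y
      using that assms(2) in_M composition_rule by auto
  qed
  moreover have "inj_on (image_action \<iota> M \<phi>) (carrier G)"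
  proof (rule inj_onI)
    fix g h
    assume gh: "g \<in> carrier G" "h \<in> carrier G" "image_action \<iota> M \<phi> g = image_action \<iota> M \<phi> h"
    have "\<phi> g x = \<phi> h x" if "x \<in> M" for x
      using fun_cong[OF gh(3), of "\<iota> x"] that gh(1,2) assms(2) in_M
      by (simp add: inj_on_eq_iff)
    then have "\<phi> g = \<phi> h"
      using bij_prop0[OF gh(1)] bij_prop0[OF gh(2)]
      by (intro extensionalityI[where A = M]) (simp_all add: Bij_def)
    then show "g = h"
      using faithful gh(1,2) by (simp add: inj_on_eq_iff)
  qed
  ultimately show ?thesis
    by (simp add: faithful_action_def faithful_action_axioms_def)
qed

lemma isometric_action_image:
  assumes "isometric_action A M d \<phi>" "inj_on \<iota> M" "\<And>g x. g \<in> A \<Longrightarrow> x \<in> M \<Longrightarrow> \<phi> g x \<in> M"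
  shows "isometric_action A (\<iota> ` M) (image_dist \<iota> M d) (image_action \<iota> M \<phi>)"
  using assms unfolding isometric_action_def by auto

lemma continuous_map_image_action:
  assumes "Metric_space M d" "inj_on \<iota> M"
    and "continuous_map (prod_topology T (Metric_space.mtopology M d)) (Metric_space.mtopology M d)
           (\<lambda>(g, x). \<phi> g x)"
  shows "continuous_map (prod_topology T (Metric_space.mtopology (\<iota> ` M) (image_dist \<iota> M d)))
           (Metric_space.mtopology (\<iota> ` M) (image_dist \<iota> M d)) (\<lambda>(g, y). image_action \<iota> M \<phi> g y)"
proof -
  interpret M: Metric_space M d
    by fact
  interpret N: Metric_space "\<iota> ` M" "image_dist \<iota> M d"
    using Metric_space_image_dist[OF assms(1,2)] .
  interpret MN: Metric_space12 M d "\<iota> ` M" "image_dist \<iota> M d"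
    using assms(1) N.Metric_space_axioms by (simp add: Metric_space12_def)
  interpret NM: Metric_space12 "\<iota> ` M" "image_dist \<iota> M d" M d
    using assms(1) N.Metric_space_axioms by (simp add: Metric_space12_def)
  let ?j = "inv_into M \<iota>"
  have "homeomorphic_map M.mtopology N.mtopology \<iota>"
    using assms(2) by (intro MN.isometry_imp_homeomorphic_map) auto
  then have \<iota>: "continuous_map M.mtopology N.mtopology \<iota>"
    by (simp add: homeomorphic_imp_continuous_map)
  have "homeomorphic_map N.mtopology M.mtopology ?j"
    using assms(2) by (intro NM.isometry_imp_homeomorphic_map) (auto simp: image_dist_def)
  then have j: "continuous_map N.mtopology M.mtopology ?j"
    by (simp add: homeomorphic_imp_continuous_map)
  have "continuous_map (prod_topology T N.mtopology) (prod_topology T M.mtopology)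
          (\<lambda>p. (fst p, ?j (snd p)))"
    using continuous_map_compose[OF continuous_map_snd j]
    by (simp add: continuous_map_paired continuous_map_fst o_def)
  then have "continuous_map (prod_topology T N.mtopology) N.mtopology
               (\<iota> \<circ> (\<lambda>(g, x). \<phi> g x) \<circ> (\<lambda>p. (fst p, ?j (snd p))))"
    using assms(3) \<iota> by (intro continuous_map_compose)
  then show ?thesis
    by (rule continuous_map_eq) (auto simp: image_action_def)
qed

definition isometric_extension ::
    "('g, 'b) monoid_scheme \<Rightarrow> 'g topology \<Rightarrow> 'g set \<Rightarrow> 'z set \<Rightarrow> ('z \<Rightarrow> 'z \<Rightarrow> real) \<Rightarrow>
     ('g \<Rightarrow> 'z \<Rightarrow> 'z) \<Rightarrow> 'y set \<Rightarrow> ('y \<Rightarrow> 'y \<Rightarrow> real) \<Rightarrow> ('g \<Rightarrow> 'y \<Rightarrow> 'y) \<Rightarrow> ('z \<Rightarrow> 'y) \<Rightarrow> bool"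
  where "isometric_extension K TK \<Gamma> Z dZ \<phi> Y dY \<psi> e \<longleftrightarrow>
           Polish_metric_space Y dY \<and> bounded_metric_space Y dY \<and>
           faithful_action K Y \<psi> \<and> isometric_action (carrier K) Y dY \<psi> \<and>
           continuous_map (prod_topology TK (Metric_space.mtopology Y dY))
                          (Metric_space.mtopology Y dY) (\<lambda>(g, y). \<psi> g y) \<and>
           e \<in> Z \<rightarrow> Y \<and>
           (\<forall>z\<in>Z. \<forall>z'\<in>Z. dY (e z) (e z') = dZ z z') \<and>
           (\<forall>\<gamma>\<in>\<Gamma>. \<forall>z\<in>Z. e (\<phi> \<gamma> z) = \<psi> \<gamma> (e z))"

lemma isometric_extension_image:
  assumes ext: "isometric_extension K TK \<Gamma> Z dZ \<phi> Y dY \<psi> e" and "inj_on \<iota> Y"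
  shows "isometric_extension K TK \<Gamma> Z dZ \<phi> (\<iota> ` Y) (image_dist \<iota> Y dY) (image_action \<iota> Y \<psi>) (\<iota> \<circ> e)"
proof -
  have Y: "Polish_metric_space Y dY" "bounded_metric_space Y dY" "faithful_action K Y \<psi>"
      "isometric_action (carrier K) Y dY \<psi>" and e: "e \<in> Z \<rightarrow> Y"
    using ext by (simp_all add: isometric_extension_def)
  have in_Y: "\<psi> g y \<in> Y" if "g \<in> carrier K" "y \<in> Y" for g y
    using group_action.element_image[OF faithful_action.axioms(1)[OF Y(3)] that refl] .
  have "Metric_space Y dY"
    using Y(1) by (simp add: Polish_metric_space_def)
  then show ?thesis
    using assms Y e in_Y
    by (auto simp: isometric_extension_def Polish_metric_space_image_dist bounded_metric_space_image_dist
        faithful_action_image isometric_action_image continuous_map_image_action Pi_iff subset_iff)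
qed

lemma isometric_extension_into_nat_real:
  assumes "isometric_extension K TK \<Gamma> Z dZ \<phi> Y dY \<psi> e"
  shows "\<exists>(Y' :: (nat \<Rightarrow> real) set) dY' \<psi>' e'. isometric_extension K TK \<Gamma> Z dZ \<phi> Y' dY' \<psi>' e'"
proof -
  have "Metric_space Y dY" "separable_space (Metric_space.mtopology Y dY)"
    using assms by (simp_all add: isometric_extension_def Polish_metric_space_def)
  then obtain \<iota> :: "_ \<Rightarrow> nat \<Rightarrow> real" where "inj_on \<iota> Y"
    using Metric_space.separable_imp_inj_into_nat_real by blast
  then show ?thesis
    using isometric_extension_image[OF assms] by blast
qed

section \<open>The induced isometric action\<close>

lemma discrete_subgroup_isolated:
  fixes K (structure)
  assumes "discrete_subgroup \<Gamma> K TK" "Metric_space (carrier K) d"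
    and "Metric_space.mtopology (carrier K) d = TK"
  obtains \<delta> where "\<delta> > 0" "\<And>\<gamma>. \<gamma> \<in> \<Gamma> \<Longrightarrow> d \<one> \<gamma> < \<delta> \<Longrightarrow> \<gamma> = \<one>"
proof -
  interpret Metric_space "carrier K" d
    by fact
  have sub: "subgroup \<Gamma> K" and discrete: "subtopology TK \<Gamma> = discrete_topology \<Gamma>"
    using assms(1) by (auto simp: discrete_subgroup_def)
  then have "openin (subtopology TK \<Gamma>) {\<one>}"
    using subgroup.one_closed by fastforce
  then obtain U where U: "openin TK U" "{\<one>} = U \<inter> \<Gamma>"
    unfolding openin_subtopology by blast
  moreover have "\<one> \<in> U"
    using U(2) by blast
  moreover have "openin mtopology U"
    using U(1) assms(3) by simp
  ultimately obtain \<delta> where \<delta>: "\<delta> > 0" "mball \<one> \<delta> \<subseteq> U"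
    unfolding openin_mtopology by blast
  have "\<gamma> = \<one>" if "\<gamma> \<in> \<Gamma>" "d \<one> \<gamma> < \<delta>" for \<gamma>
  proof -
    have "\<gamma> \<in> mball \<one> \<delta>"
      using that sub subgroup.subset subgroup.one_closed by fastforce
    then show ?thesis
      using U(2) \<delta>(2) that(1) by blast
  qed
  with \<delta>(1) that show ?thesis
    by blast
qed

lemma min_diff_le: "\<bar>min (c :: real) a - min c b\<bar> \<le> \<bar>a - b\<bar>"
  by (simp add: min_def abs_if)

locale isometric_induction =
  fixes K :: "('g, 'b) monoid_scheme" (structure)
    and d :: "'g \<Rightarrow> 'g \<Rightarrow> real"
    and \<Gamma> :: "'g set"
    and Z :: "'z set" and dZ :: "'z \<Rightarrow> 'z \<Rightarrow> real"
    and \<phi> :: "'g \<Rightarrow> 'z \<Rightarrow> 'z"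
    and B \<delta> :: real
  assumes group: "group K"
    and Metric_space_d: "Metric_space (carrier K) d"
    and d_biinvariant: "\<And>g x y. g \<in> carrier K \<Longrightarrow> x \<in> carrier K \<Longrightarrow> y \<in> carrier K \<Longrightarrow>
           d (g \<otimes> x) (g \<otimes> y) = d x y \<and> d (x \<otimes> g) (y \<otimes> g) = d x y"
    and subgroup: "subgroup \<Gamma> K"
    and group_action: "group_action (K\<lparr>carrier := \<Gamma>\<rparr>) Z \<phi>"
    and isometric: "isometric_action \<Gamma> Z dZ \<phi>"
    and Metric_space_dZ: "Metric_space Z dZ"
    and dZ_le: "\<And>x y. x \<in> Z \<Longrightarrow> y \<in> Z \<Longrightarrow> dZ x y \<le> B"
    and B_ge_1: "1 \<le> B"
    and \<delta>_pos: "\<delta> > 0"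
    and discrete: "\<And>\<gamma>. \<gamma> \<in> \<Gamma> \<Longrightarrow> d \<one> \<gamma> < \<delta> \<Longrightarrow> \<gamma> = \<one>"
begin

sublocale group K
  by (fact group)

sublocale dK: Metric_space "carrier K" d
  by (fact Metric_space_d)

sublocale dZ: Metric_space Z dZ
  by (fact Metric_space_dZ)

sublocale \<Gamma>: subgroup \<Gamma> K
  by (fact subgroup)

lemma d_left_invariant:
  "g \<in> carrier K \<Longrightarrow> x \<in> carrier K \<Longrightarrow> y \<in> carrier K \<Longrightarrow> d (g \<otimes> x) (g \<otimes> y) = d x y"
  using d_biinvariant by blast

lemma d_right_invariant:
  "g \<in> carrier K \<Longrightarrow> x \<in> carrier K \<Longrightarrow> y \<in> carrier K \<Longrightarrow> d (x \<otimes> g) (y \<otimes> g) = d x y"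
  using d_biinvariant by blast

lemma d_inv:
  assumes "g \<in> carrier K" "h \<in> carrier K"
  shows "d (inv g) (inv h) = d g h"
proof -
  have "d (inv g) (inv h) = d (g \<otimes> inv g) (g \<otimes> inv h)"
    using d_left_invariant[of g "inv g" "inv h"] assms by simp
  also have "\<dots> = d (\<one> \<otimes> h) (g \<otimes> inv h \<otimes> h)"
    using d_right_invariant[of h \<one> "g \<otimes> inv h"] assms by simp
  also have "\<dots> = d h g"
    using assms by (simp add: m_assoc)
  finally show ?thesis
    by (simp add: dK.commute)
qed

lemma action_closed: "\<gamma> \<in> \<Gamma> \<Longrightarrow> z \<in> Z \<Longrightarrow> \<phi> \<gamma> z \<in> Z"
  using group_action.element_image[OF group_action, of \<gamma> z] by simp

lemma action_mult: "\<gamma> \<in> \<Gamma> \<Longrightarrow> \<eta> \<in> \<Gamma> \<Longrightarrow> z \<in> Z \<Longrightarrow> \<phi> (\<gamma> \<otimes> \<eta>) z = \<phi> \<gamma> (\<phi> \<eta> z)"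
  using group_action.composition_rule[OF group_action, of z \<gamma> \<eta>] by simp

lemma action_one: "z \<in> Z \<Longrightarrow> \<phi> \<one> z = z"
  using fun_cong[OF group_action.id_eq_one[OF group_action], of z] by simp

lemma action_isometric: "\<gamma> \<in> \<Gamma> \<Longrightarrow> x \<in> Z \<Longrightarrow> y \<in> Z \<Longrightarrow> dZ (\<phi> \<gamma> x) (\<phi> \<gamma> y) = dZ x y"
  using isometric by (simp add: isometric_action_def)

definition C :: real
  where "C = B / \<delta>"

definition L :: real
  where "L = max C 1"

lemma C_pos: "C > 0"
  using B_ge_1 \<delta>_pos by (simp add: C_def)

lemma C_times_\<delta>: "C * \<delta> = B"
  using \<delta>_pos by (simp add: C_def)

lemma L_ge_1: "L \<ge> 1" and C_le_L: "C \<le> L"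
  by (simp_all add: L_def)

definition induced_dist :: "'z \<Rightarrow> 'g \<Rightarrow> 'z \<Rightarrow> real"
  where "induced_dist z k w = (INF \<gamma>\<in>\<Gamma>. C * d k \<gamma> + dZ (\<phi> (inv \<gamma>) z) w)"

lemma induced_dist_term_nonneg:
  "0 \<le> C * d k \<gamma> + dZ (\<phi> (inv \<gamma>) z) w"
  using C_pos by simp

lemma induced_dist_le:
  assumes "\<gamma> \<in> \<Gamma>"
  shows "induced_dist z k w \<le> C * d k \<gamma> + dZ (\<phi> (inv \<gamma>) z) w"
  unfolding induced_dist_def
  by (rule cINF_lower[OF bdd_belowI2 assms]) (rule induced_dist_term_nonneg)

lemma induced_dist_greatest:
  assumes "\<And>\<gamma>. \<gamma> \<in> \<Gamma> \<Longrightarrow> c \<le> C * d k \<gamma> + dZ (\<phi> (inv \<gamma>) z) w"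
  shows "c \<le> induced_dist z k w"
  unfolding induced_dist_def
proof (rule cINF_greatest)
  show "\<Gamma> \<noteq> {}"
    using \<Gamma>.one_closed by blast
qed (fact assms)

lemma induced_dist_nonneg: "0 \<le> induced_dist z k w"
  by (rule induced_dist_greatest) (rule induced_dist_term_nonneg)

lemma induced_dist_Lipschitz_point:
  assumes "z \<in> Z" "z' \<in> Z" "w \<in> Z"
  shows "\<bar>induced_dist z k w - induced_dist z' k w\<bar> \<le> dZ z z'"
proof -
  have "induced_dist z k w \<le> induced_dist z' k w + dZ z z'" if "z \<in> Z" "z' \<in> Z" for z z'
  proof -
    have "induced_dist z k w - dZ z z' \<le> induced_dist z' k w"
    proof (rule induced_dist_greatest)
      fix \<gamma>
      assume "\<gamma> \<in> \<Gamma>"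
      then have "inv \<gamma> \<in> \<Gamma>"
        by (rule \<Gamma>.m_inv_closed)
      then have "dZ (\<phi> (inv \<gamma>) z) w \<le> dZ z z' + dZ (\<phi> (inv \<gamma>) z') w"
        using dZ.triangle[of "\<phi> (inv \<gamma>) z" "\<phi> (inv \<gamma>) z'" w] that assms(3)
        by (simp add: action_closed action_isometric)
      then show "induced_dist z k w - dZ z z' \<le> C * d k \<gamma> + dZ (\<phi> (inv \<gamma>) z') w"
        using induced_dist_le[OF \<open>\<gamma> \<in> \<Gamma>\<close>, of z k w] by linarith
    qed
    then show ?thesis
      by linarith
  qed
  from this[OF assms(1,2)] this[OF assms(2,1)] show ?thesis
    by (simp add: dZ.commute abs_le_iff)
qed

lemma induced_dist_Lipschitz_K:
  assumes "k \<in> carrier K" "k' \<in> carrier K"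
  shows "\<bar>induced_dist z k w - induced_dist z k' w\<bar> \<le> C * d k k'"
proof -
  have "induced_dist z k w \<le> induced_dist z k' w + C * d k k'"
    if "k \<in> carrier K" "k' \<in> carrier K" for k k'
  proof -
    have "induced_dist z k w - C * d k k' \<le> induced_dist z k' w"
    proof (rule induced_dist_greatest)
      fix \<gamma>
      assume "\<gamma> \<in> \<Gamma>"
      then have "d k \<gamma> \<le> d k k' + d k' \<gamma>"
        using that \<Gamma>.subset by (intro dK.triangle) auto
      then have "C * d k \<gamma> \<le> C * d k k' + C * d k' \<gamma>"
        using C_pos by (simp add: distrib_left[symmetric])
      then show "induced_dist z k w - C * d k k' \<le> C * d k' \<gamma> + dZ (\<phi> (inv \<gamma>) z) w"
        using induced_dist_le[OF \<open>\<gamma> \<in> \<Gamma>\<close>, of z k w] by linarith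
    qed
    then show ?thesis
      by linarith
  qed
  from this[OF assms(1,2)] this[OF assms(2,1)] show ?thesis
    by (simp add: dK.commute abs_le_iff)
qed

text \<open>Discreteness of \<open>\<Gamma>\<close> and the choice of \<open>C\<close> make every \<open>\<gamma> \<noteq> \<one>\<close> cost at least
  \<open>C * \<delta> = B\<close>, which is more than any distance in \<open>Z\<close>.\<close>
lemma induced_dist_one:
  assumes "z \<in> Z" "w \<in> Z"
  shows "induced_dist z \<one> w = dZ z w"
proof (rule antisym)
  show "induced_dist z \<one> w \<le> dZ z w"
    using induced_dist_le[OF \<Gamma>.one_closed, of z \<one> w] assms by (simp add: action_one)
  show "dZ z w \<le> induced_dist z \<one> w"
  proof (rule induced_dist_greatest)
    fix \<gamma>
    assume \<gamma>: "\<gamma> \<in> \<Gamma>"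
    show "dZ z w \<le> C * d \<one> \<gamma> + dZ (\<phi> (inv \<gamma>) z) w"
    proof (cases "\<gamma> = \<one>")
      case True
      then show ?thesis
        using assms by (simp add: action_one)
    next
      case False
      then have "\<delta> \<le> d \<one> \<gamma>"
        using discrete[OF \<gamma>] by force
      then have "B \<le> C * d \<one> \<gamma>"
        using C_pos C_times_\<delta> by (metis mult_left_mono less_le)
      then show ?thesis
        using dZ_le[OF assms] dZ.nonneg[of "\<phi> (inv \<gamma>) z" w] by linarith
    qed
  qed
qed

lemma induced_dist_action:
  assumes "\<eta> \<in> \<Gamma>" "k \<in> carrier K" "z \<in> Z"
  shows "induced_dist (\<phi> \<eta> z) k w = induced_dist z (inv \<eta> \<otimes> k) w"
proof -
  have \<eta>: "\<eta> \<in> carrier K" "inv \<eta> \<in> \<Gamma>"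
    using assms(1) \<Gamma>.subset \<Gamma>.m_inv_closed by auto
  have reindex: "(\<lambda>\<gamma>. inv \<eta> \<otimes> \<gamma>) ` \<Gamma> = \<Gamma>"
  proof
    show "(\<lambda>\<gamma>. inv \<eta> \<otimes> \<gamma>) ` \<Gamma> \<subseteq> \<Gamma>"
      using \<eta>(2) \<Gamma>.m_closed by auto
    show "\<Gamma> \<subseteq> (\<lambda>\<gamma>. inv \<eta> \<otimes> \<gamma>) ` \<Gamma>"
    proof
      fix \<gamma>
      assume "\<gamma> \<in> \<Gamma>"
      then have "\<gamma> = inv \<eta> \<otimes> (\<eta> \<otimes> \<gamma>)" "\<eta> \<otimes> \<gamma> \<in> \<Gamma>"
        using \<eta>(1) \<Gamma>.subset assms(1) \<Gamma>.m_closed by (auto simp: m_assoc[symmetric])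
      then show "\<gamma> \<in> (\<lambda>\<gamma>. inv \<eta> \<otimes> \<gamma>) ` \<Gamma>"
        by blast
    qed
  qed
  have summand: "C * d (inv \<eta> \<otimes> k) (inv \<eta> \<otimes> \<gamma>) + dZ (\<phi> (inv (inv \<eta> \<otimes> \<gamma>)) z) w =
      C * d k \<gamma> + dZ (\<phi> (inv \<gamma>) (\<phi> \<eta> z)) w" if "\<gamma> \<in> \<Gamma>" for \<gamma>
  proof -
    have "\<gamma> \<in> carrier K" "inv \<gamma> \<in> \<Gamma>"
      using that \<Gamma>.subset \<Gamma>.m_inv_closed by auto
    then show ?thesis
      using assms \<eta> by (simp add: d_left_invariant inv_mult_group action_mult)
  qed
  have "induced_dist z (inv \<eta> \<otimes> k) w
      = (INF \<gamma>\<in>\<Gamma>. C * d (inv \<eta> \<otimes> k) (inv \<eta> \<otimes> \<gamma>) + dZ (\<phi> (inv (inv \<eta> \<otimes> \<gamma>)) z) w)"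
    unfolding induced_dist_def by (subst (1) reindex[symmetric]) (simp add: image_comp o_def)
  also have "\<dots> = induced_dist (\<phi> \<eta> z) k w"
    unfolding induced_dist_def by (rule INF_cong[OF refl summand])
  finally show ?thesis
    by simp
qed

text \<open>\<open>None\<close> is the extra point \<open>\<star>\<close>, carrying the faithfulness witness \<open>marker\<close>.\<close>
definition W :: "'z option set"
  where "W = insert None (Some ` Z)"

definition I :: "('g \<times> 'z option) set"
  where "I = carrier K \<times> W"

abbreviation F :: "('g \<times> 'z option \<Rightarrow> real) set"
  where "F \<equiv> Met_TC.fspace I"

abbreviation D :: "('g \<times> 'z option \<Rightarrow> real) \<Rightarrow> ('g \<times> 'z option \<Rightarrow> real) \<Rightarrow> real"
  where "D \<equiv> Met_TC.fdist I"

sublocale F: Metric_space F D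
  by (rule Met_TC.Metric_space_funspace)

definition transl :: "'g \<Rightarrow> ('g \<times> 'z option \<Rightarrow> real) \<Rightarrow> 'g \<times> 'z option \<Rightarrow> real"
  where "transl g f = (\<lambda>x\<in>I. f (inv g \<otimes> fst x, snd x))"

definition K_Lipschitz :: "('g \<times> 'z option \<Rightarrow> real) \<Rightarrow> bool"
  where "K_Lipschitz f \<longleftrightarrow>
           (\<forall>k\<in>carrier K. \<forall>k'\<in>carrier K. \<forall>w\<in>W. \<bar>f (k, w) - f (k', w)\<bar> \<le> L * d k k')"

lemma I_nonempty: "I \<noteq> {}"
  by (auto simp: I_def W_def)

lemma transl_index: "g \<in> carrier K \<Longrightarrow> x \<in> I \<Longrightarrow> (inv g \<otimes> fst x, snd x) \<in> I"
  by (auto simp: I_def)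

lemma transl_in_F:
  assumes "f \<in> F" "g \<in> carrier K"
  shows "transl g f \<in> F"
proof -
  have "transl g f ` I \<subseteq> f ` I"
    using transl_index[OF assms(2)] by (auto simp: transl_def)
  moreover have "bounded (f ` I)"
    using assms(1) by (simp add: Met_TC.fspace_def)
  ultimately show ?thesis
    by (simp add: Met_TC.fspace_def transl_def bounded_subset)
qed

lemma transl_mult:
  assumes "g \<in> carrier K" "h \<in> carrier K"
  shows "transl g (transl h f) = transl (g \<otimes> h) f"
proof
  fix x
  show "transl g (transl h f) x = transl (g \<otimes> h) f x"
  proof (cases "x \<in> I")
    case True
    then obtain k w where x: "x = (k, w)" "k \<in> carrier K" "w \<in> W"
      by (auto simp: I_def)
    then have "(inv g \<otimes> k, w) \<in> I"
      using assms(1) by (simp add: I_def)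
    then show ?thesis
      using True x assms by (simp add: transl_def inv_mult_group m_assoc)
  qed (simp add: transl_def)
qed

lemma transl_one:
  assumes "f \<in> extensional I"
  shows "transl \<one> f = f"
proof
  fix x
  show "transl \<one> f x = f x"
  proof (cases "x \<in> I")
    case True
    then have "fst x \<in> carrier K"
      by (auto simp: I_def)
    then show ?thesis
      using True by (simp add: transl_def)
  qed (simp add: transl_def extensional_arb[OF assms])
qed

lemma transl_isometric:
  assumes "f \<in> F" "f' \<in> F" "g \<in> carrier K"
  shows "D (transl g f) (transl g f') = D f f'"
proof -
  have le: "D (transl g f) (transl g f') \<le> D f f'" if "f \<in> F" "f' \<in> F" "g \<in> carrier K" for f f' g
  proof (rule fdist_le[OF transl_in_F[OF that(1,3)] transl_in_F[OF that(2,3)] I_nonempty])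
    fix x
    assume "x \<in> I"
    then have "dist (f (inv g \<otimes> fst x, snd x)) (f' (inv g \<otimes> fst x, snd x)) \<le> D f f'"
      using that transl_index by (intro dist_le_fdist) auto
    with \<open>x \<in> I\<close> show "dist (transl g f x) (transl g f' x) \<le> D f f'"
      by (simp add: transl_def)
  qed
  have "D f f' = D (transl (inv g) (transl g f)) (transl (inv g) (transl g f'))"
    using assms by (simp add: transl_mult transl_one Met_TC.fspace_def)
  also have "\<dots> \<le> D (transl g f) (transl g f')"
    using assms by (intro le transl_in_F) auto
  finally show ?thesis
    using le[OF assms] by linarith
qed

lemma dist_transl_K_Lipschitz:
  assumes "K_Lipschitz f" "f \<in> F" "g \<in> carrier K" "h \<in> carrier K"
  shows "D (transl g f) (transl h f) \<le> L * d g h"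
proof (rule fdist_le[OF transl_in_F[OF assms(2,3)] transl_in_F[OF assms(2,4)] I_nonempty])
  fix x
  assume "x \<in> I"
  then obtain k w where x: "x = (k, w)" "k \<in> carrier K" "w \<in> W"
    by (auto simp: I_def)
  then have "\<bar>f (inv g \<otimes> k, w) - f (inv h \<otimes> k, w)\<bar> \<le> L * d (inv g \<otimes> k) (inv h \<otimes> k)"
    using assms(1,3,4) unfolding K_Lipschitz_def by simp
  also have "\<dots> = L * d g h"
    using x assms(3,4) by (simp add: d_right_invariant d_inv)
  finally show "dist (transl g f x) (transl h f x) \<le> L * d g h"
    using \<open>x \<in> I\<close> x by (simp add: transl_def dist_real_def)
qed

definition embed :: "'z \<Rightarrow> 'g \<times> 'z option \<Rightarrow> real"
  where "embed z = (\<lambda>x\<in>I. case snd x of None \<Rightarrow> 0 | Some w \<Rightarrow> min B (induced_dist z (fst x) w))"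

definition marker :: "'g \<times> 'z option \<Rightarrow> real"
  where "marker = (\<lambda>x\<in>I. case snd x of None \<Rightarrow> min 1 (d (fst x) \<one>) | Some w \<Rightarrow> 0)"

lemma embed_None: "k \<in> carrier K \<Longrightarrow> embed z (k, None) = 0"
  and embed_Some: "k \<in> carrier K \<Longrightarrow> w \<in> Z \<Longrightarrow> embed z (k, Some w) = min B (induced_dist z k w)"
  and marker_None: "k \<in> carrier K \<Longrightarrow> marker (k, None) = min 1 (d k \<one>)"
  and marker_Some: "k \<in> carrier K \<Longrightarrow> w \<in> Z \<Longrightarrow> marker (k, Some w) = 0"
  by (auto simp: embed_def marker_def I_def W_def)

lemma I_cases:
  assumes "x \<in> I"
  obtains k where "x = (k, None)" "k \<in> carrier K"
    | k w where "x = (k, Some w)" "k \<in> carrier K" "w \<in> Z"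
  using assms by (auto simp: I_def W_def)

definition seeds :: "('g \<times> 'z option \<Rightarrow> real) set"
  where "seeds = insert marker (embed ` Z)"

lemma seed_bounded:
  assumes "f \<in> seeds" "x \<in> I"
  shows "\<bar>f x\<bar> \<le> B"
  using assms(2)
proof (cases rule: I_cases)
  case (1 k)
  then show ?thesis
    using assms(1) B_ge_1 by (auto simp: seeds_def embed_None marker_None)
next
  case (2 k w)
  then show ?thesis
    using assms(1) B_ge_1 induced_dist_nonneg by (auto simp: seeds_def embed_Some marker_Some)
qed

lemma seed_in_F:
  assumes "f \<in> seeds"
  shows "f \<in> F"
proof -
  have "f \<in> extensional I"
    using assms by (auto simp: seeds_def embed_def marker_def)
  moreover have "bounded (f ` I)"
    unfolding bounded_iff by (rule exI[of _ B]) (use seed_bounded[OF assms] in auto)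
  ultimately show ?thesis
    by (simp add: Met_TC.fspace_def)
qed

lemma seed_K_Lipschitz:
  assumes "f \<in> seeds"
  shows "K_Lipschitz f"
  unfolding K_Lipschitz_def
proof (intro ballI)
  fix k k' w
  assume k: "k \<in> carrier K" "k' \<in> carrier K" and "w \<in> W"
  have "d k k' \<le> L * d k k'"
    using mult_right_mono[OF L_ge_1 dK.nonneg[of k k']] by simp
  moreover have "C * d k k' \<le> L * d k k'"
    using mult_right_mono[OF C_le_L dK.nonneg[of k k']] .
  moreover have "\<bar>d k \<one> - d k' \<one>\<bar> \<le> d k k'"
    using dK.mdist_reverse_triangle[of k \<one> k'] k by (simp add: dK.commute[of k' \<one>])
  ultimately have marker_le: "\<bar>min 1 (d k \<one>) - min 1 (d k' \<one>)\<bar> \<le> L * d k k'"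
    and embed_le: "\<bar>min B (induced_dist z k v) - min B (induced_dist z k' v)\<bar> \<le> L * d k k'" for z v
    using min_diff_le[of 1 "d k \<one>" "d k' \<one>"] min_diff_le[of B "induced_dist z k v" "induced_dist z k' v"]
      induced_dist_Lipschitz_K[OF k, of z v] by linarith+
  have "0 \<le> L * d k k'"
    using L_ge_1 by simp
  moreover have "f = marker \<or> (\<exists>z. f = embed z)"
    using assms by (auto simp: seeds_def)
  moreover have "w = None \<or> (\<exists>v\<in>Z. w = Some v)"
    using \<open>w \<in> W\<close> by (auto simp: W_def)
  ultimately show "\<bar>f (k, w) - f (k', w)\<bar> \<le> L * d k k'"
  proof (elim disjE exE bexE)
    assume "f = marker" "w = None"
    then show ?thesis
      using k marker_le by (simp only: marker_None)
  next
    fix z assume "f = embed z" "w = None"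
    then show ?thesis
      using k \<open>0 \<le> L * d k k'\<close> by (simp only: embed_None)
  next
    fix v assume "f = marker" "v \<in> Z" "w = Some v"
    then show ?thesis
      using k \<open>0 \<le> L * d k k'\<close> by (simp only: marker_Some)
  next
    fix z v assume "f = embed z" "v \<in> Z" "w = Some v"
    then show ?thesis
      using k embed_le by (simp only: embed_Some)
  qed
qed

lemma dist_embed:
  assumes "z \<in> Z" "z' \<in> Z"
  shows "D (embed z) (embed z') = dZ z z'"
proof (rule antisym)
  have "embed z \<in> F" "embed z' \<in> F"
    using assms by (simp_all add: seed_in_F seeds_def)
  then show "D (embed z) (embed z') \<le> dZ z z'"
  proof (rule fdist_le[OF _ _ I_nonempty])
    fix x
    assume "x \<in> I"
    then show "dist (embed z x) (embed z' x) \<le> dZ z z'"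
    proof (cases rule: I_cases)
      case (2 k w)
      then have "dist (embed z x) (embed z' x)
          = \<bar>min B (induced_dist z k w) - min B (induced_dist z' k w)\<bar>"
        by (simp add: embed_Some dist_real_def)
      then show ?thesis
        using min_diff_le[of B "induced_dist z k w" "induced_dist z' k w"]
          induced_dist_Lipschitz_point[OF assms \<open>w \<in> Z\<close>, of k] by linarith
    qed (simp add: embed_None)
  qed
  have "(\<one>, Some z') \<in> I"
    using assms by (simp add: I_def W_def)
  moreover have "dist (embed z (\<one>, Some z')) (embed z' (\<one>, Some z')) = dZ z z'"
    using assms dZ_le[OF assms] B_ge_1 by (simp add: embed_Some induced_dist_one dist_real_def)
  ultimately show "dZ z z' \<le> D (embed z) (embed z')"
    using dist_le_fdist[OF \<open>embed z \<in> F\<close> \<open>embed z' \<in> F\<close>] by metis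
qed

lemma embed_equivariant:
  assumes "\<eta> \<in> \<Gamma>" "z \<in> Z"
  shows "embed (\<phi> \<eta> z) = transl \<eta> (embed z)"
proof
  fix x
  have \<eta>: "\<eta> \<in> carrier K"
    using assms(1) \<Gamma>.subset by blast
  show "embed (\<phi> \<eta> z) x = transl \<eta> (embed z) x"
  proof (cases "x \<in> I")
    case True
    then show ?thesis
    proof (cases rule: I_cases)
      case (1 k)
      then show ?thesis
        using True \<eta> by (simp add: transl_def embed_None)
    next
      case (2 k w)
      then show ?thesis
        using True \<eta> assms by (simp add: transl_def embed_Some induced_dist_action)
    qed
  qed (simp add: transl_def embed_def)
qed

lemma transl_marker_inj:
  assumes "g \<in> carrier K" "h \<in> carrier K" "transl g marker = transl h marker"
  shows "g = h"
proof -
  have "(g, None) \<in> I"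
    using assms by (simp add: I_def W_def)
  then have "min 1 (d (inv h \<otimes> g) \<one>) = 0"
    using fun_cong[OF assms(3), of "(g, None)"] assms(1,2) by (simp add: transl_def marker_None)
  then have "inv h \<otimes> g = \<one>"
    using assms(1,2) dK.zero[of "inv h \<otimes> g" \<one>] by (simp add: min_def split: if_splits)
  moreover have "g = h \<otimes> (inv h \<otimes> g)"
    using assms(1,2) by (simp add: m_assoc[symmetric])
  ultimately show ?thesis
    using assms(2) by simp
qed

definition orbits :: "('g \<times> 'z option \<Rightarrow> real) set"
  where "orbits = {transl g f | g f. g \<in> carrier K \<and> f \<in> seeds}"

definition Y :: "('g \<times> 'z option \<Rightarrow> real) set"
  where "Y = F.mtopology closure_of orbits"

lemma orbits_subset_F: "orbits \<subseteq> F"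
  by (auto simp: orbits_def seed_in_F transl_in_F)

lemma seeds_subset_orbits: "seeds \<subseteq> orbits"
proof
  fix f
  assume "f \<in> seeds"
  then have "transl \<one> f = f"
    using seed_in_F by (simp add: transl_one Met_TC.fspace_def)
  with \<open>f \<in> seeds\<close> show "f \<in> orbits"
    unfolding orbits_def by force
qed

lemma orbits_subset_Y: "orbits \<subseteq> Y"
  unfolding Y_def using orbits_subset_F by (simp add: closure_of_subset)

lemma Y_subset_F: "Y \<subseteq> F"
  unfolding Y_def using closure_of_subset_topspace by fastforce

lemma Y_approx:
  assumes "f \<in> Y" "r > 0"
  obtains s where "s \<in> orbits" "D f s < r"
  using assms unfolding Y_def F.metric_closure_of by fastforce

lemma transl_orbits:
  assumes "s \<in> orbits" "g \<in> carrier K"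
  shows "transl g s \<in> orbits"
proof -
  obtain h f where "s = transl h f" "h \<in> carrier K" "f \<in> seeds"
    using assms(1) by (auto simp: orbits_def)
  then have "transl g s = transl (g \<otimes> h) f" "g \<otimes> h \<in> carrier K"
    using assms(2) by (simp_all add: transl_mult)
  with \<open>f \<in> seeds\<close> show ?thesis
    unfolding orbits_def by blast
qed

lemma transl_Y:
  assumes "f \<in> Y" "g \<in> carrier K"
  shows "transl g f \<in> Y"
proof -
  have "\<exists>s\<in>orbits. s \<in> F.mball (transl g f) r" if "r > 0" for r
  proof -
    obtain s where s: "s \<in> orbits" "D f s < r"
      using Y_approx[OF assms(1) \<open>r > 0\<close>] .
    then have "D (transl g f) (transl g s) < r"
      using assms Y_subset_F orbits_subset_F by (simp add: subset_iff transl_isometric)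
    then show ?thesis
      using s(1) assms Y_subset_F orbits_subset_F transl_orbits
      by (intro bexI[of _ "transl g s"]) (auto simp: transl_in_F)
  qed
  then show ?thesis
    using assms Y_subset_F transl_in_F unfolding Y_def F.metric_closure_of by blast
qed

text \<open>Translation moves the seeds \<open>L\<close>-Lipschitz in \<open>g\<close>; right invariance of \<open>d\<close> carries this
  over to their orbits, and the isometric action to the closure.\<close>
lemma dist_transl_Y:
  assumes "f \<in> Y" "g \<in> carrier K" "h \<in> carrier K"
  shows "D (transl g f) (transl h f) \<le> L * d g h"
proof (rule field_le_epsilon)
  fix r :: real
  assume "r > 0"
  then obtain s where s: "s \<in> orbits" "D f s < r / 2"
    using Y_approx[OF assms(1)] half_gt_zero by blast
  then obtain k f0 where s_eq: "s = transl k f0" and k: "k \<in> carrier K" and "f0 \<in> seeds"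
    by (auto simp: orbits_def)
  have F: "f \<in> F" "s \<in> F" "f0 \<in> F"
    using assms(1) s(1) \<open>f0 \<in> seeds\<close> Y_subset_F orbits_subset_F seed_in_F by auto
  have "D (transl g s) (transl h s) = D (transl (g \<otimes> k) f0) (transl (h \<otimes> k) f0)"
    using assms k by (simp add: s_eq transl_mult)
  also have "\<dots> \<le> L * d (g \<otimes> k) (h \<otimes> k)"
    using assms k F(3) seed_K_Lipschitz[OF \<open>f0 \<in> seeds\<close>] by (intro dist_transl_K_Lipschitz) auto
  also have "\<dots> = L * d g h"
    using assms k by (simp add: d_right_invariant)
  finally have s_move: "D (transl g s) (transl h s) \<le> L * d g h" .
  have "D (transl g f) (transl h f)
      \<le> D (transl g f) (transl g s) + D (transl g s) (transl h s) + D (transl h s) (transl h f)"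
    using F assms transl_in_F F.triangle by (smt (verit))
  also have "\<dots> = 2 * D f s + D (transl g s) (transl h s)"
    using F assms by (simp add: transl_isometric F.commute[of s f])
  finally show "D (transl g f) (transl h f) \<le> L * d g h + r"
    using s(2) s_move by linarith
qed

lemma dist_transl_le:
  assumes "f \<in> Y" "f' \<in> Y" "g \<in> carrier K" "h \<in> carrier K"
  shows "D (transl g f) (transl h f') \<le> L * d g h + D f f'"
proof -
  have F: "f \<in> F" "f' \<in> F"
    using assms Y_subset_F by auto
  have "D (transl g f) (transl h f') \<le> D (transl g f) (transl h f) + D (transl h f) (transl h f')"
    using F assms by (intro F.triangle transl_in_F) auto
  also have "\<dots> \<le> L * d g h + D f f'"
    using dist_transl_Y[OF assms(1,3,4)] transl_isometric[OF F assms(4)] by simp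
  finally show ?thesis .
qed

lemma Metric_space_Y: "Metric_space Y D"
  using F.subspace[OF Y_subset_F] .

lemma mcomplete_Y: "Metric_space.mcomplete Y D"
proof -
  interpret Submetric F D Y
    by unfold_locales (fact Y_subset_F)
  have "closedin F.mtopology Y"
    unfolding Y_def by (rule closedin_closure_of)
  then show ?thesis
    using mcomplete_fspace by (rule closedin_mcomplete_imp_mcomplete)
qed

lemma bounded_Y: "bounded_metric_space Y D"
proof -
  have bounded: "\<bar>s x\<bar> \<le> B" if "s \<in> orbits" "x \<in> I" for s x
    using that transl_index seed_bounded by (auto simp: orbits_def transl_def)
  have "D s s' \<le> 2 * B" if "s \<in> orbits" "s' \<in> orbits" for s s'
  proof (rule fdist_le[OF _ _ I_nonempty])
    show "s \<in> F" "s' \<in> F"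
      using that orbits_subset_F by auto
    fix x
    assume "x \<in> I"
    then show "dist (s x) (s' x) \<le> 2 * B"
      using bounded[OF that(1) \<open>x \<in> I\<close>] bounded[OF that(2) \<open>x \<in> I\<close>]
        abs_triangle_ineq4[of "s x" "s' x"]
      by (simp add: dist_real_def)
  qed
  then have "F.mbounded orbits"
    using orbits_subset_F unfolding F.mbounded_alt by blast
  then have "F.mbounded Y"
    unfolding Y_def by (rule F.mbounded_closure_of)
  then show ?thesis
    using Metric_space_Y Y_subset_F
    unfolding bounded_metric_space_def F.mbounded_alt Metric_space.mbounded_alt[OF Metric_space_Y]
    by blast
qed

lemma seeds_countable_dense:
  assumes "separable_space dZ.mtopology"
  obtains Sc where "countable Sc" "Sc \<subseteq> seeds" "\<And>f r. f \<in> seeds \<Longrightarrow> r > 0 \<Longrightarrow> \<exists>f'\<in>Sc. D f f' < r"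
proof -
  obtain Zc where Zc: "countable Zc" "Zc \<subseteq> Z" "\<And>z r. z \<in> Z \<Longrightarrow> r > 0 \<Longrightarrow> \<exists>c\<in>Zc. dZ z c < r"
    using assms unfolding dZ.separable_space_mtopology_iff by blast
  define Sc where "Sc = insert marker (embed ` Zc)"
  have "\<exists>f'\<in>Sc. D f f' < r" if "f \<in> seeds" "r > 0" for f r
  proof -
    consider "f = marker" | z where "z \<in> Z" "f = embed z"
      using \<open>f \<in> seeds\<close> by (auto simp: seeds_def)
    then show ?thesis
    proof cases
      case 1
      then show ?thesis
        using \<open>r > 0\<close> seed_in_F by (auto simp: Sc_def seeds_def)
    next
      case 2
      then obtain z' where "z' \<in> Zc" "dZ z z' < r"
        using Zc(3) \<open>r > 0\<close> by blast
      then have "embed z' \<in> Sc" "D f (embed z') < r"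
        using 2 Zc(2) dist_embed by (auto simp: Sc_def)
      then show ?thesis
        by blast
    qed
  qed
  moreover have "countable Sc" "Sc \<subseteq> seeds"
    using Zc(1,2) by (auto simp: Sc_def seeds_def)
  ultimately show ?thesis
    using that by blast
qed

lemma separable_Y:
  assumes "separable_space dK.mtopology" "separable_space dZ.mtopology"
  shows "separable_space (Metric_space.mtopology Y D)"
proof -
  obtain Kc where Kc: "countable Kc" "Kc \<subseteq> carrier K"
      "\<And>g r. g \<in> carrier K \<Longrightarrow> r > 0 \<Longrightarrow> \<exists>c\<in>Kc. d g c < r"
    using assms(1) unfolding dK.separable_space_mtopology_iff by blast
  obtain Sc where Sc: "countable Sc" "Sc \<subseteq> seeds" "\<And>f r. f \<in> seeds \<Longrightarrow> r > 0 \<Longrightarrow> \<exists>f'\<in>Sc. D f f' < r"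
    using seeds_countable_dense[OF assms(2)] by blast
  define Q where "Q = (\<lambda>(g, f). transl g f) ` (Kc \<times> Sc)"
  have "Q \<subseteq> Y"
  proof
    fix q
    assume "q \<in> Q"
    then obtain g f where "q = transl g f" "g \<in> Kc" "f \<in> Sc"
      by (auto simp: Q_def)
    then show "q \<in> Y"
      using Kc(2) Sc(2) seeds_subset_orbits orbits_subset_Y transl_Y by blast
  qed
  moreover have "countable Q"
    using Kc(1) Sc(1) by (simp add: Q_def)
  moreover have "\<exists>q\<in>Q. D f q < r" if "f \<in> Y" "r > 0" for f r
  proof -
    obtain s where s: "s \<in> orbits" "D f s < r / 3"
      using Y_approx[OF \<open>f \<in> Y\<close>] \<open>r > 0\<close> by (metis divide_pos_pos zero_less_numeral)
    then obtain g f0 where s_eq: "s = transl g f0" and g: "g \<in> carrier K" and "f0 \<in> seeds"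
      by (auto simp: orbits_def)
    have "r / (3 * L) > 0"
      using \<open>r > 0\<close> L_ge_1 by simp
    then obtain g' where g': "g' \<in> Kc" "d g g' < r / (3 * L)"
      using Kc(3)[OF g] by blast
    obtain f0' where f0': "f0' \<in> Sc" "D f0 f0' < r / 3"
      using Sc(3)[OF \<open>f0 \<in> seeds\<close>] \<open>r > 0\<close> by (metis divide_pos_pos zero_less_numeral)
    have Y: "f0 \<in> Y" "f0' \<in> Y" "s \<in> Y"
      using \<open>f0 \<in> seeds\<close> f0'(1) Sc(2) s(1) seeds_subset_orbits orbits_subset_Y by auto
    then have "transl g' f0' \<in> Y"
      using g'(1) Kc(2) transl_Y by blast
    have "D s (transl g' f0') \<le> L * d g g' + D f0 f0'"
      using Y g g' Kc(2) s_eq by (auto intro: dist_transl_le)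
    also have "L * d g g' < r / 3"
      using g'(2) L_ge_1 by (simp add: field_simps)
    finally have "D s (transl g' f0') < 2 * r / 3"
      using f0'(2) by linarith
    moreover have "D f (transl g' f0') \<le> D f s + D s (transl g' f0')"
      using Y \<open>transl g' f0' \<in> Y\<close> \<open>f \<in> Y\<close> Y_subset_F by (intro F.triangle) auto
    moreover have "transl g' f0' \<in> Q"
      using g'(1) f0'(1) by (force simp: Q_def)
    ultimately show ?thesis
      using s(2) by (intro bexI[of _ "transl g' f0'"]) auto
  qed
  ultimately show ?thesis
    unfolding Metric_space.separable_space_mtopology_iff[OF Metric_space_Y] by blast
qed

lemma isometric_extension_Y:
  assumes "separable_space dK.mtopology" "separable_space dZ.mtopology"
  shows "isometric_extension K dK.mtopology \<Gamma> Z dZ \<phi> Y D (\<lambda>g. restrict (transl g) Y) embed"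
proof -
  have Y_ext: "f \<in> extensional I" if "f \<in> Y" for f
    using that Y_subset_F by (auto simp: Met_TC.fspace_def)
  have marker_Y: "marker \<in> Y" and embed_Y: "z \<in> Z \<Longrightarrow> embed z \<in> Y" for z
    using seeds_subset_orbits orbits_subset_Y by (auto simp: seeds_def)
  have "group_action K Y (\<lambda>g. restrict (transl g) Y)"
    by (rule group_actionI) (auto simp: transl_Y transl_mult transl_one Y_ext intro: group)
  moreover have "inj_on (\<lambda>g. restrict (transl g) Y) (carrier K)"
    using marker_Y transl_marker_inj by (intro inj_onI) (metis restrict_apply')
  ultimately have "faithful_action K Y (\<lambda>g. restrict (transl g) Y)"
    by (simp add: faithful_action_def faithful_action_axioms_def)
  moreover have "isometric_action (carrier K) Y D (\<lambda>g. restrict (transl g) Y)"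
    using Y_subset_F by (auto simp: isometric_action_def transl_Y intro!: transl_isometric)
  moreover have "continuous_map (prod_topology dK.mtopology (Metric_space.mtopology Y D))
      (Metric_space.mtopology Y D) (\<lambda>(g, f). restrict (transl g) Y f)"
    using Metric_space_d Metric_space_Y
    by (rule continuous_map_of_dist_le[where L = L]) (use L_ge_1 in \<open>auto simp: transl_Y dist_transl_le\<close>)
  moreover have "Polish_metric_space Y D"
    using Metric_space_Y mcomplete_Y separable_Y[OF assms] by (simp add: Polish_metric_space_def)
  ultimately show ?thesis
    using bounded_Y embed_Y dist_embed embed_equivariant
    by (simp add: isometric_extension_def)
qed

end

lemma isometric_extension_exists:
  fixes K :: "('g, 'b) monoid_scheme" (structure) and Z :: "'z set"
  assumes "Polish_group K TK"
    and "has_compatible_biinvariant_metric K TK"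
    and "discrete_subgroup \<Gamma> K TK"
    and "Polish_metric_space Z dZ"
    and "bounded_metric_space Z dZ"
    and "group_action (K\<lparr>carrier := \<Gamma>\<rparr>) Z \<phi>"
    and "isometric_action \<Gamma> Z dZ \<phi>"
  shows "\<exists>(Y :: ('g \<times> 'z option \<Rightarrow> real) set) dY \<psi> e. isometric_extension K TK \<Gamma> Z dZ \<phi> Y dY \<psi> e"
proof -
  obtain d where d: "Metric_space (carrier K) d" "Metric_space.mtopology (carrier K) d = TK"
    and biinvariant: "\<And>g x y. g \<in> carrier K \<Longrightarrow> x \<in> carrier K \<Longrightarrow> y \<in> carrier K \<Longrightarrow>
           d (g \<otimes> x) (g \<otimes> y) = d x y \<and> d (x \<otimes> g) (y \<otimes> g) = d x y"
    using assms(2) unfolding has_compatible_biinvariant_metric_def by blast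
  obtain \<delta> where \<delta>: "\<delta> > 0" "\<And>\<gamma>. \<gamma> \<in> \<Gamma> \<Longrightarrow> d \<one> \<gamma> < \<delta> \<Longrightarrow> \<gamma> = \<one>"
    using discrete_subgroup_isolated[OF assms(3) d] by blast
  have "group K" "separable_space TK"
    using assms(1) by (simp_all add: Polish_group_def topological_group_def Polish_space_def)
  have "subgroup \<Gamma> K"
    using assms(3) by (simp add: discrete_subgroup_def)
  have Z: "Metric_space Z dZ" "separable_space (Metric_space.mtopology Z dZ)"
    using assms(4) by (simp_all add: Polish_metric_space_def)
  have "Metric_space.mbounded Z dZ Z"
    using assms(5) by (simp add: bounded_metric_space_def)
  then obtain B where B: "\<forall>x\<in>Z. \<forall>y\<in>Z. dZ x y \<le> B"
    unfolding Metric_space.mbounded_alt[OF Z(1)] by blast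
  interpret isometric_induction K d \<Gamma> Z dZ \<phi> "max B 1" \<delta>
  proof (rule isometric_induction.intro)
    show "dZ x y \<le> max B 1" if "x \<in> Z" "y \<in> Z" for x y
      using B that by (simp add: le_max_iff_disj)
  qed (use d(1) biinvariant \<delta> assms(6,7) Z(1) \<open>group K\<close> \<open>subgroup \<Gamma> K\<close> in \<open>assumption | simp\<close>)+
  have "isometric_extension K TK \<Gamma> Z dZ \<phi> Y D (\<lambda>g. restrict (transl g) Y) embed"
    using isometric_extension_Y \<open>separable_space TK\<close> Z(2) d(2) by simp
  then show ?thesis
    by blast
qed

theorem lemma6p1:
  fixes K :: "('g, 'b) monoid_scheme" (structure)
    and TK :: "'g topology"
    and \<Gamma> :: "'g set"
    and Z :: "'z set" and dZ :: "'z \<Rightarrow> 'z \<Rightarrow> real"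
    and \<phi> :: "'g \<Rightarrow> 'z \<Rightarrow> 'z"
  assumes "Polish_group K TK"
    and "has_compatible_biinvariant_metric K TK"
    and "discrete_subgroup \<Gamma> K TK"
    and "Polish_metric_space Z dZ"
    and "bounded_metric_space Z dZ"
    and "faithful_action (K\<lparr>carrier := \<Gamma>\<rparr>) Z \<phi>"
    and "isometric_action \<Gamma> Z dZ \<phi>"
  shows "\<exists>(Y :: (nat \<Rightarrow> real) set) dY \<psi> e.
           Polish_metric_space Y dY \<and> bounded_metric_space Y dY \<and>
           faithful_action K Y \<psi> \<and>
           isometric_action (carrier K) Y dY \<psi> \<and>
           continuous_map (prod_topology TK (Metric_space.mtopology Y dY))
                          (Metric_space.mtopology Y dY) (\<lambda>(g, y). \<psi> g y) \<and>
           e \<in> Z \<rightarrow> Y \<and>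
           (\<forall>z\<in>Z. \<forall>z'\<in>Z. dY (e z) (e z') = dZ z z') \<and>
           (\<forall>\<gamma>\<in>\<Gamma>. \<forall>z\<in>Z. e (\<phi> \<gamma> z) = \<psi> \<gamma> (e z))"
proof -
  have "group_action (K\<lparr>carrier := \<Gamma>\<rparr>) Z \<phi>"
    using assms(6) by (simp add: faithful_action_def)
  then obtain Y :: "('g \<times> 'z option \<Rightarrow> real) set" and dY \<psi> e
    where "isometric_extension K TK \<Gamma> Z dZ \<phi> Y dY \<psi> e"
    using isometric_extension_exists[OF assms(1-5) _ assms(7)] by blast
  then obtain Y' :: "(nat \<Rightarrow> real) set" and dY' \<psi>' e'
    where "isometric_extension K TK \<Gamma> Z dZ \<phi> Y' dY' \<psi>' e'"
    using isometric_extension_into_nat_real by blast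
  then show ?thesis
    unfolding isometric_extension_def by blast
qed

end
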